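(* Fix $x_0\in\mathbb{R}^n$ and an integer $\ell\ge1$, and consider the following iteration (Kaczmarz method with affine search). For $k=0,1,2,\ldots$: set $d_k=P(x_k)-x_k$ and $\delta_k=\|d_k\|^2$; if $\delta_k=0$, terminate and return $x_k$; otherwise set $\rho_k=\|r(x_k)\|^2$, $\gamma_k=\frac12(\rho_k+\delta_k)$, $j_k=\max\{k-\ell+1,0\}$, $V_k=(x_{j_k}-x_k,\ldots,x_{k-1}-x_k)\in\mathbb{R}^{n\times(k-j_k)}$ (empty if $k=j_k$), $M_k=(V_k,d_k)\in\mathbb{R}^{n\times(k-j_k+1)}$, let $s_k$ solve $M_k^TM_ks_k=\gamma_ke_{k-j_k+1}$ (with $e_{k-j_k+1}$ the last unit vector of $\mathbb{R}^{k-j_k+1}$), and set $x_{k+1}=x_k+M_ks_k$. Let $x^*\in\mathbb{R}^n$ satisfy $Ax^*=b$. Then either the iteration terminates and returns some $x_k$ with $Ax_k=b$, or it generates a well-defined infinite sequence $(x_k)_k$ (i.e. every $M_k^TM_k$ is invertible) such that for all $k\in\mathbb{N}$: \[x_{k+1}=\operatorname{argmin}_{\xi\in\operatorname{aff}(x_{j_k},\ldots,x_k,P(x_k))}\|\xi-x^*\|^2,\qquad \|x_k-x^*\|^2-\|x_{k+1}-x^*\|^2=\gamma_k^2\frac{\det(V_k^TV_k)}{\det(M_k^TM_k)},\] and in particular $\|x_{k+1}-x^*\|^2\le\|P(x_k)-x^*\|^2$ for all $k$.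
   Context: Let $A=(a_1,\ldots,a_m)^T\in\mathbb{R}^{m\times n}$ with rows $a_j\in\mathbb{R}^n\setminus\{0\}$, and let $b\in\mathbb{R}^m$ lie in the range of $A$. Norms are Euclidean. For $j=1,\ldots,m$ define the projectors $P_j:\mathbb{R}^n\to\mathbb{R}^n$, $P_j(x)=\big(I-\frac{a_ja_j^T}{\|a_j\|^2}\big)x+\frac{b_j}{\|a_j\|^2}a_j$ (the orthogonal projection onto $\{z:a_j^Tz=b_j\}$), and the Kaczmarz cycle $P=P_m\circ\cdots\circ P_1$. The residual $r:\mathbb{R}^n\to\mathbb{R}^m$ is defined by $r_1(x)=(a_1^Tx-b_1)/\|a_1\|$ and $r_j(x)=(a_j^T(P_{j-1}\circ\cdots\circ P_1)(x)-b_j)/\|a_j\|$ for $j=2,\ldots,m$. $\operatorname{aff}(\cdot)$ denotes the affine hull. The determinant of an empty ($0\times0$) Gram matrix is taken to be $1$. *)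

theory Defs
  imports "HOL-Analysis.Analysis" "Jordan_Normal_Form.Determinant"
begin

text \<open>Rows of A are a 0 .. a (m-1) (0-indexed), right-hand side b 0 .. b (m-1).\<close>

definition kproj :: "(nat \<Rightarrow> real^'n) \<Rightarrow> (nat \<Rightarrow> real) \<Rightarrow> nat \<Rightarrow> real^'n \<Rightarrow> real^'n" where
  "kproj a b j x = (x - ((a j \<bullet> x) / (norm (a j))^2) *\<^sub>R a j) + (b j / (norm (a j))^2) *\<^sub>R a j"

text \<open>kcyc a b j = P_j o ... o P_1 (0-indexed: projections onto rows 0..j-1).\<close>
primrec kcyc :: "(nat \<Rightarrow> real^'n) \<Rightarrow> (nat \<Rightarrow> real) \<Rightarrow> nat \<Rightarrow> real^'n \<Rightarrow> real^'n" where
  "kcyc a b 0 x = x"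
| "kcyc a b (Suc j) x = kproj a b j (kcyc a b j x)"

definition kP :: "(nat \<Rightarrow> real^'n) \<Rightarrow> (nat \<Rightarrow> real) \<Rightarrow> nat \<Rightarrow> real^'n \<Rightarrow> real^'n" where
  "kP a b m x = kcyc a b m x"

text \<open>Residual component r_(j+1)(x) (0-indexed j < m) and squared norm of the residual.\<close>
definition kres :: "(nat \<Rightarrow> real^'n) \<Rightarrow> (nat \<Rightarrow> real) \<Rightarrow> nat \<Rightarrow> real^'n \<Rightarrow> real" where
  "kres a b j x = (a j \<bullet> kcyc a b j x - b j) / norm (a j)"

definition kres_sq :: "(nat \<Rightarrow> real^'n) \<Rightarrow> (nat \<Rightarrow> real) \<Rightarrow> nat \<Rightarrow> real^'n \<Rightarrow> real" where
  "kres_sq a b m x = (\<Sum>j<m. (kres a b j x)^2)"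

text \<open>Gram matrix C^T C of the matrix C whose columns are the list cs.\<close>
definition gram :: "(real^'n) list \<Rightarrow> real mat" where
  "gram cs = mat (length cs) (length cs) (\<lambda>(i,j). cs ! i \<bullet> cs ! j)"

definition colcomb :: "(real^'n) list \<Rightarrow> real vec \<Rightarrow> real^'n" where
  "colcomb cs s = (\<Sum>i<length cs. (vec_index s i) *\<^sub>R cs ! i)"

definition kd :: "(nat \<Rightarrow> real^'n) \<Rightarrow> (nat \<Rightarrow> real) \<Rightarrow> nat \<Rightarrow> real^'n \<Rightarrow> real^'n" where
  "kd a b m x = kP a b m x - x"

definition kgamma :: "(nat \<Rightarrow> real^'n) \<Rightarrow> (nat \<Rightarrow> real) \<Rightarrow> nat \<Rightarrow> real^'n \<Rightarrow> real" where
  "kgamma a b m x = (kres_sq a b m x + (norm (kd a b m x))^2) / 2"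

text \<open>j_k = max(k - l + 1, 0) (truncated nat subtraction)\<close>
definition kj :: "nat \<Rightarrow> nat \<Rightarrow> nat" where
  "kj l k = Suc k - l"

definition kV :: "nat \<Rightarrow> (real^'n) list \<Rightarrow> (real^'n) list" where
  "kV l hs = map (\<lambda>i. hs ! i - last hs) [kj l (length hs - 1) ..< length hs - 1]"

definition kM :: "(nat \<Rightarrow> real^'n) \<Rightarrow> (nat \<Rightarrow> real) \<Rightarrow> nat \<Rightarrow> nat \<Rightarrow> (real^'n) list \<Rightarrow> (real^'n) list" where
  "kM a b m l hs = kV l hs @ [kd a b m (last hs)]"

text \<open>s_k: the solution of M_k^T M_k s = gamma_k e_last (unique when the Gram matrix is invertible).\<close>
definition ks :: "(nat \<Rightarrow> real^'n) \<Rightarrow> (nat \<Rightarrow> real) \<Rightarrow> nat \<Rightarrow> nat \<Rightarrow> (real^'n) list \<Rightarrow> real vec" where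
  "ks a b m l hs = (let M = kM a b m l hs; p = length M in
     THE s. s \<in> carrier_vec p \<and> gram M *\<^sub>v s = kgamma a b m (last hs) \<cdot>\<^sub>v unit_vec p (p - 1))"

definition kstep :: "(nat \<Rightarrow> real^'n) \<Rightarrow> (nat \<Rightarrow> real) \<Rightarrow> nat \<Rightarrow> nat \<Rightarrow> (real^'n) list \<Rightarrow> real^'n" where
  "kstep a b m l hs = last hs + colcomb (kM a b m l hs) (ks a b m l hs)"

text \<open>History [x_0, ..., x_k] of the iteration (continued formally regardless of termination).\<close>
primrec khist :: "(nat \<Rightarrow> real^'n) \<Rightarrow> (nat \<Rightarrow> real) \<Rightarrow> nat \<Rightarrow> nat \<Rightarrow> real^'n \<Rightarrow> nat \<Rightarrow> (real^'n) list" where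
  "khist a b m l x0 0 = [x0]"
| "khist a b m l x0 (Suc k) = khist a b m l x0 k @ [kstep a b m l (khist a b m l x0 k)]"

definition kx :: "(nat \<Rightarrow> real^'n) \<Rightarrow> (nat \<Rightarrow> real) \<Rightarrow> nat \<Rightarrow> nat \<Rightarrow> real^'n \<Rightarrow> nat \<Rightarrow> real^'n" where
  "kx a b m l x0 k = khist a b m l x0 k ! k"

end

theory Submission
  imports Defs
begin

text \<open>
  Write u = x_(k+1) - x_k. The Gram system M_k^T M_k s_k = gamma_k e_last says that every column
  of M_k has the same inner product with u as with x* - x_k. For the columns x_i - x_k that
  product is 0, because inductively x_k is the orthogonal projection of x* onto the previous affine
  hull; for d_k it is gamma_k, by the Pythagorean identity for the projections P_j. Hence x* - x_(k+1)
  is orthogonal to aff(x_(j_k), ..., x_k, P(x_k)), which gives the argmin property and the inequality,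
  and ||x_k - x*||^2 - ||x_(k+1) - x*||^2 = ||u||^2 = gamma_k (s_k)_last, where Cramer's rule gives
  (s_k)_last = gamma_k det(V_k^T V_k) / det(M_k^T M_k).
  The Gram matrix is invertible because the window differences are linearly independent and
  orthogonal to x* - x_k whereas d_k is not; and d_k . u = gamma_k > 0 makes the last coefficient
  of s_k nonzero, which keeps the next window independent.
\<close>

section \<open>Kaczmarz projections\<close>

lemma kproj_dist:
  fixes a :: "nat \<Rightarrow> real^'n" and b :: "nat \<Rightarrow> real"
  assumes "a j \<noteq> 0" "a j \<bullet> xs = b j"
  shows "(norm (kproj a b j y - xs))^2 = (norm (y - xs))^2 - ((a j \<bullet> y - b j) / norm (a j))^2"
proof -
  define t where "t = (a j \<bullet> y - b j) / (norm (a j))^2"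
  have "kproj a b j y - xs = (y - xs) - t *\<^sub>R a j"
    unfolding kproj_def t_def by (simp add: algebra_simps diff_divide_distrib)
  moreover have "(norm ((y - xs) - t *\<^sub>R a j))^2
      = (norm (y - xs))^2 - 2 * t * (a j \<bullet> (y - xs)) + t^2 * (norm (a j))^2"
    unfolding power2_norm_eq_inner
    by (simp add: inner_diff_left inner_diff_right inner_commute power2_eq_square algebra_simps)
  moreover have "a j \<bullet> (y - xs) = a j \<bullet> y - b j"
    using assms(2) by (simp add: inner_diff_right)
  ultimately have "(norm (kproj a b j y - xs))^2
      = (norm (y - xs))^2 - 2 * t * (a j \<bullet> y - b j) + t^2 * (norm (a j))^2"
    by (simp only:)
  moreover have "2 * t * (a j \<bullet> y - b j) - t^2 * (norm (a j))^2 = ((a j \<bullet> y - b j) / norm (a j))^2"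
    using assms(1) by (simp add: t_def power2_eq_square field_simps)
  ultimately show ?thesis by linarith
qed

lemma kcyc_dist:
  fixes a :: "nat \<Rightarrow> real^'n" and b :: "nat \<Rightarrow> real"
  assumes "\<forall>j<m. a j \<noteq> 0" "\<forall>j<m. a j \<bullet> xs = b j" "k \<le> m"
  shows "(norm (kcyc a b k x - xs))^2 = (norm (x - xs))^2 - (\<Sum>j<k. (kres a b j x)^2)"
  using assms(3)
proof (induction k)
  case (Suc k)
  then show ?case
    using assms(1,2) kproj_dist[of a k xs b "kcyc a b k x"] by (simp add: kres_def)
qed simp

lemma kP_dist:
  fixes a :: "nat \<Rightarrow> real^'n" and b :: "nat \<Rightarrow> real"
  assumes "\<forall>j<m. a j \<noteq> 0" "\<forall>j<m. a j \<bullet> xs = b j"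
  shows "(norm (kP a b m x - xs))^2 = (norm (x - xs))^2 - kres_sq a b m x"
  using kcyc_dist[OF assms, of m] by (simp add: kP_def kres_sq_def)

lemma kd_inner_eq_kgamma:
  fixes a :: "nat \<Rightarrow> real^'n" and b :: "nat \<Rightarrow> real"
  assumes "\<forall>j<m. a j \<noteq> 0" "\<forall>j<m. a j \<bullet> xs = b j"
  shows "kd a b m x \<bullet> (xs - x) = kgamma a b m x"
proof -
  have "kP a b m x - xs = (x - xs) + kd a b m x" by (simp add: kd_def)
  then have "(norm (kP a b m x - xs))^2
      = (norm (x - xs))^2 + 2 * (kd a b m x \<bullet> (x - xs)) + (norm (kd a b m x))^2"
    by (simp add: power2_norm_eq_inner algebra_simps inner_commute)
  with kP_dist[OF assms, of x] show ?thesis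
    unfolding kgamma_def by (simp add: inner_diff_right algebra_simps)
qed

lemma kgamma_pos:
  fixes a :: "nat \<Rightarrow> real^'n" and b :: "nat \<Rightarrow> real"
  assumes "kd a b m x \<noteq> 0"
  shows "kgamma a b m x > 0"
  using assms unfolding kgamma_def kres_sq_def by (simp add: add_nonneg_pos sum_nonneg)

lemma kd_eq_0_imp_solution:
  fixes a :: "nat \<Rightarrow> real^'n" and b :: "nat \<Rightarrow> real"
  assumes rows: "\<forall>j<m. a j \<noteq> 0" and sol: "\<forall>j<m. a j \<bullet> xs = b j"
    and "kd a b m x = 0"
  shows "\<forall>j<m. a j \<bullet> x = b j"
proof -
  have "kres_sq a b m x = 0"
    using assms kP_dist[OF rows sol, of x] by (simp add: kd_def)
  then have res: "kres a b j x = 0" if "j < m" for j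
    using that unfolding kres_sq_def by (subst (asm) sum_nonneg_eq_0_iff) auto
  have "kcyc a b k x = x \<and> (\<forall>j<k. a j \<bullet> x = b j)" if "k \<le> m" for k
    using that
  proof (induction k)
    case (Suc k)
    then have "kcyc a b k x = x" "\<forall>j<k. a j \<bullet> x = b j" by auto
    moreover have "a k \<bullet> x = b k"
      using res[of k] rows Suc.prems calculation(1) by (simp add: kres_def)
    ultimately show ?case by (auto simp: kproj_def less_Suc_eq)
  qed simp
  then show ?thesis by blast
qed

section \<open>Linearly independent lists and Gram matrices\<close>

text \<open>Independence of a list as a family of vectors: a repeated entry makes it dependent.\<close>

definition independent_list :: "(real^'n) list \<Rightarrow> bool" where
  "independent_list cs \<longleftrightarrow>
     (\<forall>c. (\<Sum>i<length cs. c i *\<^sub>R cs ! i) = 0 \<longrightarrow> (\<forall>i<length cs. c i = 0))"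

lemma sum_nth_append_single:
  fixes cs :: "'a::real_vector list"
  shows "(\<Sum>i<length (cs @ [d]). c i *\<^sub>R (cs @ [d]) ! i)
       = (\<Sum>i<length cs. c i *\<^sub>R cs ! i) + c (length cs) *\<^sub>R d"
  by (simp add: lessThan_Suc nth_append)

lemma independent_list_Nil: "independent_list []"
  by (simp add: independent_list_def)

lemma independent_list_append_single:
  fixes V :: "(real^'n) list" and d w :: "real^'n"
  assumes "independent_list V" "\<forall>v\<in>set V. v \<bullet> w = 0" "d \<bullet> w \<noteq> 0"
  shows "independent_list (V @ [d])"
  unfolding independent_list_def
proof (rule allI, rule impI)
  fix c :: "nat \<Rightarrow> real"
  assume "(\<Sum>i<length (V @ [d]). c i *\<^sub>R (V @ [d]) ! i) = 0"
  then have comb: "(\<Sum>i<length V. c i *\<^sub>R V ! i) + c (length V) *\<^sub>R d = 0"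
    by (simp only: sum_nth_append_single)
  have "(\<Sum>i<length V. c i *\<^sub>R V ! i) \<bullet> w = 0"
    using assms(2) by (simp add: inner_sum_left)
  then have "c (length V) * (d \<bullet> w) = 0"
    using arg_cong[OF comb, of "\<lambda>v. v \<bullet> w"] by (simp add: inner_add_left)
  then have last: "c (length V) = 0" using assms(3) by simp
  then have "\<forall>i<length V. c i = 0"
    using comb assms(1) by (simp add: independent_list_def)
  with last show "\<forall>i<length (V @ [d]). c i = 0"
    by (simp add: less_Suc_eq)
qed

lemma independent_list_drop:
  assumes "independent_list cs"
  shows "independent_list (drop n cs)"
  unfolding independent_list_def
proof (rule allI, rule impI)
  fix c :: "nat \<Rightarrow> real"
  assume comb: "(\<Sum>i<length (drop n cs). c i *\<^sub>R drop n cs ! i) = 0"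
  define c' where "c' i = (if n \<le> i then c (i - n) else 0)" for i
  have "(\<Sum>i<length cs. c' i *\<^sub>R cs ! i) = (\<Sum>i\<in>{n..<length cs}. c (i - n) *\<^sub>R cs ! i)"
    by (rule sum.mono_neutral_cong_right) (auto simp: c'_def)
  also have "\<dots> = (\<Sum>i<length (drop n cs). c i *\<^sub>R drop n cs ! i)"
    by (rule sum.reindex_bij_witness[where i = "\<lambda>i. i + n" and j = "\<lambda>i. i - n"])
      (auto simp: add.commute)
  finally have c': "\<forall>i<length cs. c' i = 0"
    using assms comb by (simp add: independent_list_def)
  show "\<forall>i<length (drop n cs). c i = 0"
  proof (intro allI impI)
    fix i assume "i < length (drop n cs)"
    then show "c i = 0" using c'[rule_format, of "i + n"] by (simp add: c'_def)
  qed
qed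

lemma independent_list_shift:
  fixes V :: "(real^'n) list"
  assumes indep: "independent_list (V @ [d])"
    and u: "u = colcomb (V @ [d]) s" and s: "vec_index s (length V) \<noteq> 0"
  shows "independent_list (map (\<lambda>v. v - u) V @ [- u])"
  unfolding independent_list_def
proof (rule allI, rule impI)
  fix c :: "nat \<Rightarrow> real"
  let ?q = "length V"
  define C where "C = (\<Sum>i<Suc ?q. c i)"
  \<comment> \<open>the coefficients on V @ [d] of the relation, after expanding u\<close>
  define c' where "c' i = (if i < ?q then c i - C * vec_index s i else - C * vec_index s ?q)" for i
  assume "(\<Sum>i<length (map (\<lambda>v. v - u) V @ [- u]). c i *\<^sub>R (map (\<lambda>v. v - u) V @ [- u]) ! i) = 0"
  then have "(\<Sum>i<?q. c i *\<^sub>R (V ! i - u)) - c ?q *\<^sub>R u = 0"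
    by (simp only: sum_nth_append_single) simp
  also have "(\<Sum>i<?q. c i *\<^sub>R (V ! i - u)) - c ?q *\<^sub>R u = (\<Sum>i<?q. c i *\<^sub>R V ! i) - C *\<^sub>R u"
    by (simp add: C_def scaleR_diff_right sum_subtractf scaleR_sum_left scaleR_add_left diff_diff_eq)
  also have "u = (\<Sum>i<?q. vec_index s i *\<^sub>R V ! i) + vec_index s ?q *\<^sub>R d"
    using u unfolding colcomb_def by (simp only: sum_nth_append_single)
  also have "(\<Sum>i<?q. c i *\<^sub>R V ! i) - C *\<^sub>R ((\<Sum>i<?q. vec_index s i *\<^sub>R V ! i) + vec_index s ?q *\<^sub>R d)
      = (\<Sum>i<length (V @ [d]). c' i *\<^sub>R (V @ [d]) ! i)"
  proof -
    have "(\<Sum>i<?q. c' i *\<^sub>R V ! i) = (\<Sum>i<?q. (c i - C * vec_index s i) *\<^sub>R V ! i)"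
      by (rule sum.cong) (simp_all add: c'_def)
    then show ?thesis
      by (simp only: sum_nth_append_single) (simp add: c'_def scaleR_diff_left sum_subtractf
          scaleR_add_right scaleR_sum_right)
  qed
  finally have c': "\<forall>i<Suc ?q. c' i = 0"
    using indep unfolding independent_list_def by simp
  then have "C = 0" using s by (auto simp: c'_def)
  then have first: "c i = 0" if "i < ?q" for i
    using c'[rule_format, of i] that by (simp add: c'_def)
  then have "c ?q = 0"
    using \<open>C = 0\<close> by (simp add: C_def)
  with first show "\<forall>i<length (map (\<lambda>v. v - u) V @ [- u]). c i = 0"
    by (simp add: less_Suc_eq)
qed

lemma gram_carrier: "gram cs \<in> carrier_mat (length cs) (length cs)"
  by (simp add: gram_def)

lemma gram_mult_vec_index:
  fixes cs :: "(real^'n) list"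
  assumes "s \<in> carrier_vec (length cs)" "i < length cs"
  shows "vec_index (gram cs *\<^sub>v s) i = cs ! i \<bullet> colcomb cs s"
  using assms unfolding gram_def mult_mat_vec_def scalar_prod_def colcomb_def
  by (auto simp: inner_sum_right lessThan_atLeast0 mult.commute intro!: sum.cong)

lemma det_gram_nonzero:
  fixes cs :: "(real^'n) list"
  assumes "independent_list cs"
  shows "det (gram cs) \<noteq> 0"
proof
  assume "det (gram cs) = 0"
  then obtain v where v: "v \<in> carrier_vec (length cs)" "v \<noteq> 0\<^sub>v (length cs)"
    and null: "gram cs *\<^sub>v v = 0\<^sub>v (length cs)"
    using det_0_iff_vec_prod_zero[OF gram_carrier] by blast
  have "colcomb cs v \<bullet> colcomb cs v = (\<Sum>i<length cs. vec_index v i * (cs ! i \<bullet> colcomb cs v))"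
    unfolding colcomb_def by (simp add: inner_sum_left)
  also have "\<dots> = (\<Sum>i<length cs. vec_index v i * vec_index (gram cs *\<^sub>v v) i)"
    using gram_mult_vec_index[OF v(1)] by simp
  also have "\<dots> = 0" using null by simp
  finally have "(\<Sum>i<length cs. vec_index v i *\<^sub>R cs ! i) = 0"
    by (simp add: colcomb_def)
  then have "\<forall>i<length cs. vec_index v i = 0"
    using assms by (simp add: independent_list_def)
  with v show False by (auto simp: eq_vecI)
qed

lemma invertible_mat_if_det_nonzero:
  fixes G :: "'a::field mat"
  assumes "G \<in> carrier_mat p p" "det G \<noteq> 0"
  shows "invertible_mat G"
  using det_non_zero_imp_unit[OF assms, of "()"]
  unfolding Units_def ring_mat_def invertible_mat_def inverts_mat_def by auto

lemma ex1_mat_solution: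
  fixes G :: "'a::field mat"
  assumes G: "G \<in> carrier_mat p p" and det: "det G \<noteq> 0" and c: "c \<in> carrier_vec p"
  shows "\<exists>!s. s \<in> carrier_vec p \<and> G *\<^sub>v s = c"
proof
  let ?A = "adj_mat G"
  have A: "?A \<in> carrier_mat p p" using adj_mat(1)[OF G] .
  have scalar: "(det G \<cdot>\<^sub>m 1\<^sub>m p) *\<^sub>v v = det G \<cdot>\<^sub>v v" if "v \<in> carrier_vec p" for v
    using that by auto
  show "(1 / det G) \<cdot>\<^sub>v (?A *\<^sub>v c) \<in> carrier_vec p \<and> G *\<^sub>v ((1 / det G) \<cdot>\<^sub>v (?A *\<^sub>v c)) = c"
    using A G c det adj_mat(2)[OF G] scalar[OF c]
    by (simp add: mult_mat_vec assoc_mult_mat_vec[symmetric, of G p p ?A p c] smult_smult_assoc)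
  fix s assume s: "s \<in> carrier_vec p \<and> G *\<^sub>v s = c"
  then have "det G \<cdot>\<^sub>v s = (?A * G) *\<^sub>v s"
    using adj_mat(3)[OF G] scalar by simp
  also have "\<dots> = ?A *\<^sub>v c"
    using A G s by (simp add: assoc_mult_mat_vec)
  finally have "(1 / det G) \<cdot>\<^sub>v (det G \<cdot>\<^sub>v s) = (1 / det G) \<cdot>\<^sub>v (?A *\<^sub>v c)"
    by simp
  then show "s = (1 / det G) \<cdot>\<^sub>v (?A *\<^sub>v c)"
    using det by (simp add: smult_smult_assoc)
qed

lemma cramer_unit_vec:
  fixes G :: "'a::field mat"
  assumes G: "G \<in> carrier_mat p p" and s: "s \<in> carrier_vec p" and k: "k < p"
    and sol: "G *\<^sub>v s = g \<cdot>\<^sub>v unit_vec p k"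
  shows "vec_index s k * det G = g * det (mat_delete G k k)"
proof -
  let ?R = "replace_col G (G *\<^sub>v s) k"
  have R: "?R \<in> carrier_mat p p" using G by (simp add: replace_col_def)
  have "vec_index s k * det G = det ?R" by (rule cramer_lemma_mat[OF G s k, symmetric])
  also have "\<dots> = (\<Sum>i<p. ?R $$ (i, k) * cofactor ?R i k)"
    by (rule laplace_expansion_column[OF R k])
  also have "\<dots> = (\<Sum>i<p. if i = k then g * cofactor ?R k k else 0)"
    using G k by (intro sum.cong) (auto simp: sol replace_col_def)
  also have "\<dots> = g * cofactor ?R k k"
    using k by simp
  also have "mat_delete ?R k k = mat_delete G k k"
    using G by (auto simp: mat_delete_def replace_col_def intro!: eq_matI)
  then have "cofactor ?R k k = det (mat_delete G k k)"
    by (simp add: cofactor_def flip: mult_2)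
  finally show ?thesis .
qed

lemma mat_delete_gram_append_single:
  "mat_delete (gram (V @ [d])) (length V) (length V) = gram V"
  by (intro eq_matI) (auto simp: mat_delete_def gram_def nth_append)

lemma gram_system_projection:
  fixes V :: "(real^'n) list" and d w u :: "real^'n"
  defines "M \<equiv> V @ [d]"
  assumes u: "u = colcomb M s"
    and orth: "\<forall>v\<in>set V. v \<bullet> w = 0" and g: "d \<bullet> w = g"
    and s: "s \<in> carrier_vec (length M)" "gram M *\<^sub>v s = g \<cdot>\<^sub>v unit_vec (length M) (length V)"
  shows "\<forall>c\<in>set M. c \<bullet> (w - u) = 0"
    and "u \<bullet> (w - u) = 0"
    and "u \<bullet> u = g * vec_index s (length V)"
proof -
  have col: "M ! i \<bullet> w = (if i = length V then g else 0)" if "i < length M" for i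
    using that orth g by (auto simp: M_def nth_append)
  have "M ! i \<bullet> u = M ! i \<bullet> w" if "i < length M" for i
  proof -
    have "M ! i \<bullet> u = vec_index (gram M *\<^sub>v s) i"
      using gram_mult_vec_index[OF s(1) that] u by simp
    also have "\<dots> = (if i = length V then g else 0)"
      using s(2) that by (simp add: M_def)
    finally show ?thesis using col[OF that] by simp
  qed
  then show perp: "\<forall>c\<in>set M. c \<bullet> (w - u) = 0"
    by (auto simp: in_set_conv_nth inner_diff_right)
  have u_sum: "u = (\<Sum>i<length M. vec_index s i *\<^sub>R M ! i)"
    using u by (simp add: colcomb_def)
  have "u \<bullet> (w - u) = (\<Sum>i<length M. vec_index s i * (M ! i \<bullet> (w - u)))"
    by (subst (1) u_sum) (simp add: inner_sum_left)
  also have "\<dots> = 0"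
    by (intro sum.neutral) (simp add: perp[rule_format] nth_mem)
  finally show "u \<bullet> (w - u) = 0" .
  then have "u \<bullet> u = u \<bullet> w" by (simp add: inner_diff_right)
  also have "\<dots> = (\<Sum>i<length M. vec_index s i * (M ! i \<bullet> w))"
    by (subst (1) u_sum) (simp add: inner_sum_left)
  also have "\<dots> = (\<Sum>i<length M. if i = length V then vec_index s i * g else 0)"
    using col by (intro sum.cong) auto
  also have "\<dots> = g * vec_index s (length V)"
    by (simp add: M_def)
  finally show "u \<bullet> u = g * vec_index s (length V)" .
qed

lemma gram_system_step:
  fixes V :: "(real^'n) list" and d w u :: "real^'n"
  defines "M \<equiv> V @ [d]"
  assumes u: "u = colcomb M s"
    and indep: "independent_list V" and orth: "\<forall>v\<in>set V. v \<bullet> w = 0"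
    and g: "d \<bullet> w = g" "g > 0"
    and s: "s \<in> carrier_vec (length M)" "gram M *\<^sub>v s = g \<cdot>\<^sub>v unit_vec (length M) (length V)"
  shows "\<forall>c\<in>insert 0 (set M). (c - u) \<bullet> (w - u) = 0"
    and "u \<bullet> u = g^2 * det (gram V) / det (gram M)"
    and "independent_list (map (\<lambda>v. v - u) V @ [- u])"
proof -
  note proj = gram_system_projection[OF u[unfolded M_def] orth g(1) s[unfolded M_def], folded M_def]
  show "\<forall>c\<in>insert 0 (set M). (c - u) \<bullet> (w - u) = 0"
    using proj(1,2) by (auto simp: inner_diff_left)
  have indep_M: "independent_list M"
    unfolding M_def using independent_list_append_single[OF indep orth] g by simp
  have "vec_index s (length V) * det (gram M) = g * det (gram V)"
    using cramer_unit_vec[OF gram_carrier s(1) _ s(2)]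
    by (simp add: M_def mat_delete_gram_append_single)
  then show "u \<bullet> u = g^2 * det (gram V) / det (gram M)"
    using proj(3) det_gram_nonzero[OF indep_M] by (simp add: field_simps power2_eq_square)
  have "d \<bullet> u = g" using proj(1) g(1) by (simp add: M_def inner_diff_right)
  then have "u \<bullet> u > 0" using g(2) by auto
  then have "vec_index s (length V) \<noteq> 0" using proj(3) by auto
  then show "independent_list (map (\<lambda>v. v - u) V @ [- u])"
    using independent_list_shift indep_M u unfolding M_def by blast
qed

section \<open>Orthogonal projection onto an affine hull\<close>

lemma arg_min_affine_hull_if_orthogonal:
  fixes S :: "'a::real_inner set"
  assumes p: "p \<in> affine hull S" and orth: "\<forall>y\<in>S. (y - p) \<bullet> (z - p) = 0"
  shows "is_arg_min (\<lambda>\<xi>. (norm (\<xi> - z))^2) (\<lambda>\<xi>. \<xi> \<in> affine hull S) p"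
proof -
  have "affine hull S \<subseteq> {\<xi>. (z - p) \<bullet> \<xi> = (z - p) \<bullet> p}"
  proof (rule hull_minimal)
    show "S \<subseteq> {\<xi>. (z - p) \<bullet> \<xi> = (z - p) \<bullet> p}"
    proof
      fix y assume "y \<in> S"
      then have "(z - p) \<bullet> (y - p) = 0" using orth by (simp add: inner_commute)
      then show "y \<in> {\<xi>. (z - p) \<bullet> \<xi> = (z - p) \<bullet> p}" by (simp add: inner_diff_right)
    qed
  qed (rule affine_hyperplane)
  then have "(z - p) \<bullet> (\<xi> - p) = 0" if "\<xi> \<in> affine hull S" for \<xi>
    using that by (auto simp: inner_diff_right)
  then have "(\<xi> - p) \<bullet> (p - z) = 0" if "\<xi> \<in> affine hull S" for \<xi>
    using that by (metis inner_commute inner_minus_left minus_diff_eq neg_0_equal_iff_equal)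
  then have "(norm (\<xi> - z))^2 = (norm (\<xi> - p))^2 + (norm (p - z))^2" if "\<xi> \<in> affine hull S" for \<xi>
    using norm_add_Pythagorean[of "\<xi> - p" "p - z"] that
    by (simp add: Linear_Algebra.orthogonal_def)
  then have "(norm (p - z))^2 \<le> (norm (\<xi> - z))^2" if "\<xi> \<in> affine hull S" for \<xi>
    using that by simp
  with p show ?thesis
    by (simp add: is_arg_min_linorder)
qed

lemma translate_colcomb_in_affine_hull:
  fixes cs :: "(real^'n) list"
  shows "p + colcomb cs s \<in> affine hull ((\<lambda>c. p + c) ` insert 0 (set cs))"
proof -
  let ?S = "(\<lambda>c. p + c) ` insert 0 (set cs)"
  have "p \<in> affine hull ?S" by (rule hull_inc) simp
  then have "affine hull ?S = (+) p ` span ((+) (- p) ` ?S)"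
    by (rule affine_hull_span_gen)
  also have "(+) (- p) ` ?S = insert 0 (set cs)"
    by (auto simp: image_image)
  finally have hull: "affine hull ?S = (+) p ` span (insert 0 (set cs))" .
  have "colcomb cs s \<in> span (insert 0 (set cs))"
    unfolding colcomb_def by (intro span_sum span_scale span_base) auto
  then show ?thesis
    unfolding hull by blast
qed

lemma arg_min_affine_hull_translate_colcomb:
  fixes cs :: "(real^'n) list"
  assumes "\<forall>c\<in>insert 0 (set cs). (c - colcomb cs s) \<bullet> (z - (p + colcomb cs s)) = 0"
  shows "is_arg_min (\<lambda>\<xi>. (norm (\<xi> - z))^2)
    (\<lambda>\<xi>. \<xi> \<in> affine hull ((\<lambda>c. p + c) ` insert 0 (set cs))) (p + colcomb cs s)"
  using assms by (intro arg_min_affine_hull_if_orthogonal translate_colcomb_in_affine_hull) auto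

section \<open>The Kaczmarz method with affine search\<close>

lemma length_khist: "length (khist a b m l x0 k) = Suc k"
  by (induction k) auto

lemma nth_khist: "i \<le> k \<Longrightarrow> khist a b m l x0 k ! i = kx a b m l x0 i"
proof (induction k)
  case (Suc k)
  then show ?case
    by (cases "i \<le> k") (simp_all add: nth_append length_khist kx_def le_Suc_eq)
qed (simp add: kx_def)

lemma last_khist: "last (khist a b m l x0 k) = kx a b m l x0 k"
  using nth_khist[of k k] length_khist[of a b m l x0 k]
  by (metis diff_Suc_1 last_conv_nth le_refl list.size(3) nat.distinct(1))

lemma kx_Suc:
  "kx a b m l x0 (Suc k) = kx a b m l x0 k
     + colcomb (kM a b m l (khist a b m l x0 k)) (ks a b m l (khist a b m l x0 k))"
  by (simp add: kx_def nth_append length_khist kstep_def flip: kx_def last_khist)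

lemma kV_khist:
  "kV l (khist a b m l x0 k) = map (\<lambda>i. kx a b m l x0 i - kx a b m l x0 k) [kj l k..<k]"
  unfolding kV_def length_khist last_khist by (auto simp: nth_khist)

lemma kM_khist:
  "kM a b m l (khist a b m l x0 k) = kV l (khist a b m l x0 k) @ [kd a b m (kx a b m l x0 k)]"
  by (simp add: kM_def last_khist)

lemma ks_solves_gram_system:
  fixes a :: "nat \<Rightarrow> real^'n" and b :: "nat \<Rightarrow> real" and hs :: "(real^'n) list"
  assumes "det (gram (kM a b m l hs)) \<noteq> 0"
  shows "ks a b m l hs \<in> carrier_vec (length (kM a b m l hs))"
    and "gram (kM a b m l hs) *\<^sub>v ks a b m l hs
      = kgamma a b m (last hs) \<cdot>\<^sub>v unit_vec (length (kM a b m l hs)) (length (kV l hs))"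
proof -
  let ?M = "kM a b m l hs"
  let ?solves = "\<lambda>s. s \<in> carrier_vec (length ?M)
    \<and> gram ?M *\<^sub>v s = kgamma a b m (last hs) \<cdot>\<^sub>v unit_vec (length ?M) (length (kV l hs))"
  have "\<exists>!s. ?solves s"
    by (rule ex1_mat_solution[OF gram_carrier assms]) simp
  then have "?solves (THE s. ?solves s)" by (rule theI')
  moreover have "ks a b m l hs = (THE s. ?solves s)"
    by (simp add: ks_def Let_def kM_def)
  ultimately show "ks a b m l hs \<in> carrier_vec (length ?M)"
    and "gram ?M *\<^sub>v ks a b m l hs
      = kgamma a b m (last hs) \<cdot>\<^sub>v unit_vec (length ?M) (length (kV l hs))"
    by simp_all
qed

lemma kaczmarz_affine_points:
  fixes a :: "nat \<Rightarrow> real^'n" and b :: "nat \<Rightarrow> real" and m l :: nat and x0 :: "real^'n"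
  assumes "l \<ge> 1"
  defines "x \<equiv> kx a b m l x0" and "H \<equiv> khist a b m l x0"
  shows "{x i | i. kj l k \<le> i \<and> i \<le> k} \<union> {kP a b m (x k)}
    = (\<lambda>c. x k + c) ` insert 0 (set (kM a b m l (H k)))"
proof -
  have "kj l k \<le> k" using assms(1) by (simp add: kj_def)
  then have "{x i | i. kj l k \<le> i \<and> i \<le> k} \<union> {kP a b m (x k)}
      = insert (x k) (x ` {kj l k..<k} \<union> {kP a b m (x k)})"
    by (auto simp: le_less)
  also have "\<dots> = (\<lambda>c. x k + c) ` insert 0 (set (kM a b m l (H k)))"
    by (auto simp: kM_khist kV_khist kd_def x_def H_def image_image)
  finally show ?thesis .
qed

lemma kV_khist_Suc:
  fixes a :: "nat \<Rightarrow> real^'n" and b :: "nat \<Rightarrow> real" and m l :: nat and x0 :: "real^'n"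
  assumes "l \<ge> 1"
  defines "x \<equiv> kx a b m l x0" and "H \<equiv> khist a b m l x0"
  shows "kV l (H (Suc k)) = drop (kj l (Suc k) - kj l k)
    (map (\<lambda>v. v - (x (Suc k) - x k)) (kV l (H k)) @ [x k - x (Suc k)])"
proof -
  have j: "kj l k \<le> kj l (Suc k)" "kj l k \<le> k" using assms(1) by (auto simp: kj_def)
  have "kV l (H (Suc k)) = map (\<lambda>i. x i - x (Suc k)) [kj l (Suc k)..<Suc k]"
    by (simp only: H_def x_def kV_khist)
  also have "\<dots> = drop (kj l (Suc k) - kj l k) (map (\<lambda>i. x i - x (Suc k)) [kj l k..<Suc k])"
    using j by (simp add: drop_map)
  also have "map (\<lambda>i. x i - x (Suc k)) [kj l k..<Suc k]
      = map (\<lambda>v. v - (x (Suc k) - x k)) (kV l (H k)) @ [x k - x (Suc k)]"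
    using j by (simp add: kV_khist x_def H_def)
  finally show ?thesis .
qed

lemma kaczmarz_step:
  fixes a :: "nat \<Rightarrow> real^'n" and b :: "nat \<Rightarrow> real" and m l :: nat and x0 xs :: "real^'n"
  assumes rows: "\<forall>j<m. a j \<noteq> 0" and sol: "\<forall>j<m. a j \<bullet> xs = b j" and l: "l \<ge> 1"
  defines "x \<equiv> kx a b m l x0" and "H \<equiv> khist a b m l x0"
  assumes indep: "independent_list (kV l (H k))"
    and orth: "\<forall>v\<in>set (kV l (H k)). v \<bullet> (xs - x k) = 0"
    and dnz: "kd a b m (x k) \<noteq> 0"
  shows "invertible_mat (gram (kM a b m l (H k)))"
    and "is_arg_min (\<lambda>\<xi>. (norm (\<xi> - xs))^2)
           (\<lambda>\<xi>. \<xi> \<in> affine hull ({x i | i. kj l k \<le> i \<and> i \<le> k} \<union> {kP a b m (x k)}))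
           (x (Suc k))"
    and "(norm (x k - xs))^2 - (norm (x (Suc k) - xs))^2
           = (kgamma a b m (x k))^2 * det (gram (kV l (H k))) / det (gram (kM a b m l (H k)))"
    and "independent_list (kV l (H (Suc k)))"
    and "\<forall>v\<in>set (kV l (H (Suc k))). v \<bullet> (xs - x (Suc k)) = 0"
proof -
  define V d g s where "V = kV l (H k)" and "d = kd a b m (x k)" and "g = kgamma a b m (x k)"
    and "s = ks a b m l (H k)"
  define u where "u = colcomb (V @ [d]) s"
  have M: "kM a b m l (H k) = V @ [d]" by (simp add: kM_khist V_def d_def x_def H_def)
  have g: "d \<bullet> (xs - x k) = g" "g > 0"
    using kd_inner_eq_kgamma[OF rows sol] kgamma_pos[OF dnz] by (simp_all add: d_def g_def)
  have "det (gram (V @ [d])) \<noteq> 0"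
    using independent_list_append_single[OF indep[folded V_def] orth[folded V_def]] g
    by (simp add: det_gram_nonzero)
  then show "invertible_mat (gram (kM a b m l (H k)))"
    unfolding M by (rule invertible_mat_if_det_nonzero[OF gram_carrier])
  have s: "s \<in> carrier_vec (length (V @ [d]))"
    "gram (V @ [d]) *\<^sub>v s = g \<cdot>\<^sub>v unit_vec (length (V @ [d])) (length V)"
    using ks_solves_gram_system[OF \<open>det (gram (V @ [d])) \<noteq> 0\<close>[folded M]]
    unfolding s_def[symmetric] M by (simp_all add: g_def V_def H_def x_def last_khist)
  note core = gram_system_step[OF u_def indep[folded V_def] orth[folded V_def] g s]
  have x_Suc: "x (Suc k) = x k + u"
    by (simp add: x_def H_def kx_Suc u_def s_def M[unfolded H_def x_def])
  then have w: "xs - x (Suc k) = (xs - x k) - u" by simp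
  have "(norm (xs - x k))^2 = (norm (xs - x (Suc k)))^2 + (norm u)^2"
    using norm_add_Pythagorean[of "xs - x (Suc k)" u] core(1)
    by (simp add: w Linear_Algebra.orthogonal_def inner_commute)
  with core(2) show "(norm (x k - xs))^2 - (norm (x (Suc k) - xs))^2
      = (kgamma a b m (x k))^2 * det (gram (kV l (H k))) / det (gram (kM a b m l (H k)))"
    by (simp add: M norm_minus_commute g_def V_def power2_norm_eq_inner)
  have points: "{x i | i. kj l k \<le> i \<and> i \<le> k} \<union> {kP a b m (x k)}
      = (\<lambda>c. x k + c) ` insert 0 (set (V @ [d]))"
    using kaczmarz_affine_points[OF l, of a b m x0 k] M by (simp add: x_def H_def)
  show "is_arg_min (\<lambda>\<xi>. (norm (\<xi> - xs))^2)
      (\<lambda>\<xi>. \<xi> \<in> affine hull ({x i | i. kj l k \<le> i \<and> i \<le> k} \<union> {kP a b m (x k)}))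
      (x (Suc k))"
    unfolding points x_Suc u_def
    by (rule arg_min_affine_hull_translate_colcomb) (use core(1) in \<open>simp add: u_def diff_diff_eq\<close>)
  have new_window: "kV l (H (Suc k)) = drop (kj l (Suc k) - kj l k) (map (\<lambda>v. v - u) V @ [- u])"
    using kV_khist_Suc[OF l, of a b m x0 k, folded x_def H_def] by (simp add: V_def x_Suc)
  show "independent_list (kV l (H (Suc k)))"
    unfolding new_window using core(3) by (rule independent_list_drop)
  have "set (kV l (H (Suc k))) \<subseteq> (\<lambda>c. c - u) ` insert 0 (set (V @ [d]))"
    unfolding new_window by (auto dest: in_set_dropD)
  then show "\<forall>v\<in>set (kV l (H (Suc k))). v \<bullet> (xs - x (Suc k)) = 0"
    using core(1) by (auto simp: w)
qed

lemma kaczmarz_window_invariant: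
  fixes a :: "nat \<Rightarrow> real^'n" and b :: "nat \<Rightarrow> real" and m l :: nat and x0 xs :: "real^'n"
  assumes rows: "\<forall>j<m. a j \<noteq> 0" and sol: "\<forall>j<m. a j \<bullet> xs = b j" and l: "l \<ge> 1"
  defines "x \<equiv> kx a b m l x0" and "H \<equiv> khist a b m l x0"
  assumes "\<forall>i<k. kd a b m (x i) \<noteq> 0"
  shows "independent_list (kV l (H k)) \<and> (\<forall>v\<in>set (kV l (H k)). v \<bullet> (xs - x k) = 0)"
  using assms(6)
proof (induction k)
  case 0
  have "kV l (H 0) = []" using l by (simp add: H_def kV_def kj_def)
  then show ?case by (simp add: independent_list_Nil)
next
  case (Suc k)
  then show ?case
    using kaczmarz_step(4,5)[OF rows sol l, where ?x0.0 = x0 and k = k, folded x_def H_def] by simp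
qed

lemma kaczmarz_nonterminating_step:
  fixes a :: "nat \<Rightarrow> real^'n" and b :: "nat \<Rightarrow> real" and m l :: nat and x0 xs :: "real^'n"
  assumes rows: "\<forall>j<m. a j \<noteq> 0" and sol: "\<forall>j<m. a j \<bullet> xs = b j" and l: "l \<ge> 1"
  defines "x \<equiv> kx a b m l x0" and "H \<equiv> khist a b m l x0"
  assumes "\<forall>i\<le>k. kd a b m (x i) \<noteq> 0"
  shows "invertible_mat (gram (kM a b m l (H k)))
        \<and> is_arg_min (\<lambda>\<xi>. (norm (\<xi> - xs))^2)
             (\<lambda>\<xi>. \<xi> \<in> affine hull ({x i | i. kj l k \<le> i \<and> i \<le> k} \<union> {kP a b m (x k)}))
             (x (Suc k))
        \<and> (norm (x k - xs))^2 - (norm (x (Suc k) - xs))^2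
            = (kgamma a b m (x k))^2 * det (gram (kV l (H k))) / det (gram (kM a b m l (H k)))
        \<and> (norm (x (Suc k) - xs))^2 \<le> (norm (kP a b m (x k) - xs))^2"
proof -
  have "independent_list (kV l (H k)) \<and> (\<forall>v\<in>set (kV l (H k)). v \<bullet> (xs - x k) = 0)"
    using kaczmarz_window_invariant[OF rows sol l, where ?x0.0 = x0 and k = k, folded x_def H_def]
      assms(6) by simp
  note step = kaczmarz_step[OF rows sol l, where ?x0.0 = x0 and k = k, folded x_def H_def,
      OF this[THEN conjunct1] this[THEN conjunct2] assms(6)[rule_format, OF le_refl]]
  moreover have "kP a b m (x k) \<in> affine hull ({x i | i. kj l k \<le> i \<and> i \<le> k} \<union> {kP a b m (x k)})"
    by (rule hull_inc) simp
  ultimately show ?thesis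
    by (simp add: is_arg_min_linorder)
qed

theorem theorem10:
  fixes a :: "nat \<Rightarrow> real^'n" and b :: "nat \<Rightarrow> real" and m l :: nat
    and x0 xs :: "real^'n"
  assumes rows: "\<forall>j<m. a j \<noteq> 0"
    and range: "\<exists>z. \<forall>j<m. a j \<bullet> z = b j"
    and l: "l \<ge> 1"
    and sol: "\<forall>j<m. a j \<bullet> xs = b j"
  defines "x \<equiv> kx a b m l x0"
    and "H \<equiv> khist a b m l x0"
  shows
   "(\<exists>k. kd a b m (x k) = 0
        \<and> (\<forall>i<k. kd a b m (x i) \<noteq> 0 \<and> invertible_mat (gram (kM a b m l (H i))))
        \<and> (\<forall>j<m. a j \<bullet> x k = b j))
    \<or>
    (\<forall>k. kd a b m (x k) \<noteq> 0
        \<and> invertible_mat (gram (kM a b m l (H k)))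
        \<and> is_arg_min (\<lambda>\<xi>. (norm (\<xi> - xs))^2)
             (\<lambda>\<xi>. \<xi> \<in> affine hull ({x i | i. kj l k \<le> i \<and> i \<le> k} \<union> {kP a b m (x k)}))
             (x (Suc k))
        \<and> (norm (x k - xs))^2 - (norm (x (Suc k) - xs))^2
            = (kgamma a b m (x k))^2 * det (gram (kV l (H k))) / det (gram (kM a b m l (H k)))
        \<and> (norm (x (Suc k) - xs))^2 \<le> (norm (kP a b m (x k) - xs))^2)"
proof (cases "\<exists>k. kd a b m (x k) = 0")
  case True
  define k where "k = (LEAST k. kd a b m (x k) = 0)"
  have stop: "kd a b m (x k) = 0" and before: "\<forall>i<k. kd a b m (x i) \<noteq> 0"
    using LeastI_ex[OF True] not_less_Least by (auto simp: k_def)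
  have "invertible_mat (gram (kM a b m l (H i)))" if "i < k" for i
    using kaczmarz_nonterminating_step[OF rows sol l, where ?x0.0 = x0 and k = i, folded x_def H_def]
      before that by simp
  with stop before show ?thesis
    using kd_eq_0_imp_solution[OF rows sol stop] by blast
next
  case False
  then show ?thesis
    using kaczmarz_nonterminating_step[OF rows sol l, where ?x0.0 = x0, folded x_def H_def] by simp
qed

end
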